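(* Let $\mathcal{C}$ be a finitely complete category. Then $\mathcal{C}$ is a regular category if and only if the following three conditions hold: (1) every arrow in $\mathcal{C}$ factors as a regular epimorphism followed by a monomorphism; (2) for every regular epimorphism $f\colon A\to B$ and every object $E$, the induced arrow $1_E\times f\colon E\times A\to E\times B$ is a regular epimorphism; (3) regular epimorphisms are stable under pullbacks along split monomorphisms.
   Context: A morphism is a regular epimorphism if it is the coequalizer of some pair of morphisms. A finitely complete category is regular if every arrow factors as a regular epimorphism followed by a monomorphism and these factorizations are stable under pullback. *)

theory Defs
  imports Main
begin

text \<open>A (two-sorted) category: objects, arrows, domain, codomain, identities,
  and composition; Comp C g f means g after f.\<close>

record ('o, 'a) category =
  Obj  :: "'o set"
  Arr  :: "'a set"
  Dom  :: "'a \<Rightarrow> 'o"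
  Cod  :: "'a \<Rightarrow> 'o"
  Id   :: "'o \<Rightarrow> 'a"
  Comp :: "'a \<Rightarrow> 'a \<Rightarrow> 'a"

definition hom :: "('o, 'a) category \<Rightarrow> 'o \<Rightarrow> 'o \<Rightarrow> 'a set" where
  "hom C x y = {f \<in> Arr C. Dom C f = x \<and> Cod C f = y}"

definition is_category :: "('o, 'a) category \<Rightarrow> bool" where
  "is_category C \<longleftrightarrow>
     (\<forall>f \<in> Arr C. Dom C f \<in> Obj C \<and> Cod C f \<in> Obj C) \<and>
     (\<forall>x \<in> Obj C. Id C x \<in> hom C x x) \<and>
     (\<forall>f \<in> Arr C. \<forall>g \<in> Arr C. Cod C f = Dom C g \<longrightarrow>
         Comp C g f \<in> hom C (Dom C f) (Cod C g)) \<and>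
     (\<forall>f \<in> Arr C. \<forall>g \<in> Arr C. \<forall>h \<in> Arr C.
         Cod C f = Dom C g \<longrightarrow> Cod C g = Dom C h \<longrightarrow>
         Comp C h (Comp C g f) = Comp C (Comp C h g) f) \<and>
     (\<forall>f \<in> Arr C. Comp C f (Id C (Dom C f)) = f \<and> Comp C (Id C (Cod C f)) f = f)"

definition mono :: "('o, 'a) category \<Rightarrow> 'a \<Rightarrow> bool" where
  "mono C m \<longleftrightarrow> m \<in> Arr C \<and>
     (\<forall>f \<in> Arr C. \<forall>g \<in> Arr C. Dom C f = Dom C g \<longrightarrow> Cod C f = Dom C m \<longrightarrow>
        Cod C g = Dom C m \<longrightarrow> Comp C m f = Comp C m g \<longrightarrow> f = g)"

definition split_mono :: "('o, 'a) category \<Rightarrow> 'a \<Rightarrow> bool" where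
  "split_mono C s \<longleftrightarrow> s \<in> Arr C \<and>
     (\<exists>r. r \<in> hom C (Cod C s) (Dom C s) \<and> Comp C r s = Id C (Dom C s))"

definition is_coequalizer :: "('o, 'a) category \<Rightarrow> 'a \<Rightarrow> 'a \<Rightarrow> 'a \<Rightarrow> bool" where
  "is_coequalizer C f g e \<longleftrightarrow>
     f \<in> Arr C \<and> g \<in> Arr C \<and> e \<in> Arr C \<and>
     Dom C f = Dom C g \<and> Cod C f = Cod C g \<and> Dom C e = Cod C f \<and>
     Comp C e f = Comp C e g \<and>
     (\<forall>h \<in> Arr C. Dom C h = Cod C f \<longrightarrow> Comp C h f = Comp C h g \<longrightarrow>
        (\<exists>!u. u \<in> hom C (Cod C e) (Cod C h) \<and> Comp C u e = h))"

definition regular_epi :: "('o, 'a) category \<Rightarrow> 'a \<Rightarrow> bool" where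
  "regular_epi C e \<longleftrightarrow> (\<exists>f g. is_coequalizer C f g e)"

definition is_terminal :: "('o, 'a) category \<Rightarrow> 'o \<Rightarrow> bool" where
  "is_terminal C t \<longleftrightarrow> t \<in> Obj C \<and> (\<forall>x \<in> Obj C. \<exists>!u. u \<in> hom C x t)"

text \<open>Pullback square: Comp f p = Comp g q, with p into Dom f and q into Dom g.
  Thus q is the pullback of f along g and p is the pullback of g along f.\<close>
definition is_pullback :: "('o, 'a) category \<Rightarrow> 'a \<Rightarrow> 'a \<Rightarrow> 'a \<Rightarrow> 'a \<Rightarrow> bool" where
  "is_pullback C f g p q \<longleftrightarrow>
     f \<in> Arr C \<and> g \<in> Arr C \<and> Cod C f = Cod C g \<and>
     p \<in> hom C (Dom C p) (Dom C f) \<and> q \<in> hom C (Dom C p) (Dom C g) \<and>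
     Comp C f p = Comp C g q \<and>
     (\<forall>a \<in> Arr C. \<forall>b \<in> Arr C.
        Dom C a = Dom C b \<longrightarrow> Cod C a = Dom C f \<longrightarrow> Cod C b = Dom C g \<longrightarrow>
        Comp C f a = Comp C g b \<longrightarrow>
        (\<exists>!u. u \<in> hom C (Dom C a) (Dom C p) \<and> Comp C p u = a \<and> Comp C q u = b))"

definition is_product :: "('o, 'a) category \<Rightarrow> 'o \<Rightarrow> 'o \<Rightarrow> 'o \<Rightarrow> 'a \<Rightarrow> 'a \<Rightarrow> bool" where
  "is_product C x y P p1 p2 \<longleftrightarrow>
     p1 \<in> hom C P x \<and> p2 \<in> hom C P y \<and>
     (\<forall>a \<in> Arr C. \<forall>b \<in> Arr C. Dom C a = Dom C b \<longrightarrow> Cod C a = x \<longrightarrow> Cod C b = y \<longrightarrow>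
        (\<exists>!u. u \<in> hom C (Dom C a) P \<and> Comp C p1 u = a \<and> Comp C p2 u = b))"

text \<open>Finitely complete: a terminal object and all pullbacks (standard equivalent
  of having all finite limits).\<close>
definition finitely_complete :: "('o, 'a) category \<Rightarrow> bool" where
  "finitely_complete C \<longleftrightarrow>
     (\<exists>t. is_terminal C t) \<and>
     (\<forall>f \<in> Arr C. \<forall>g \<in> Arr C. Cod C f = Cod C g \<longrightarrow> (\<exists>p q. is_pullback C f g p q))"

definition regepi_mono_factorizations :: "('o, 'a) category \<Rightarrow> bool" where
  "regepi_mono_factorizations C \<longleftrightarrow>
     (\<forall>f \<in> Arr C. \<exists>e m. regular_epi C e \<and> mono C m \<and> Cod C e = Dom C m \<and> Comp C m e = f)"

text \<open>Stability of (regular epi, mono) factorizations under pullback: pulling back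
  f = m e along g (first m along g, then e along the resulting projection) yields again
  a regular epi followed by a mono.\<close>
definition factorizations_pullback_stable :: "('o, 'a) category \<Rightarrow> bool" where
  "factorizations_pullback_stable C \<longleftrightarrow>
     (\<forall>e m g g' m' g'' e'.
        regular_epi C e \<longrightarrow> mono C m \<longrightarrow> Cod C e = Dom C m \<longrightarrow>
        g \<in> Arr C \<longrightarrow> Cod C g = Cod C m \<longrightarrow>
        is_pullback C m g g' m' \<longrightarrow> is_pullback C e g' g'' e' \<longrightarrow>
        regular_epi C e' \<and> mono C m')"

definition regular_category :: "('o, 'a) category \<Rightarrow> bool" where
  "regular_category C \<longleftrightarrow> is_category C \<and> finitely_complete C \<and>
     regepi_mono_factorizations C \<and> factorizations_pullback_stable C"

end

theory Submission
  imports Defs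
begin

(*
  Pullbacks of monos are monos in any category, so stability of the factorizations amounts to
  stability of regular epis under pullback, and (2) and (3) are instances of it: 1_E x f is the
  pullback of f along the projection E x B -> B.  Conversely, for f : A -> B regular epi and
  g : E -> B, paste that pullback square with the pullback of 1_E x f along the split mono
  <1_E, g> : E -> E x B; the pasted square is a pullback of f along g, and (2) and (3) make
  its projection to E a regular epi.
*)

locale category =
  fixes C :: "('o, 'a) category"
  assumes is_category: "is_category C"
begin

abbreviation comp (infixr "\<cdot>" 55) where "g \<cdot> f \<equiv> Comp C g f"

lemma dom_in_Obj [simp]: "f \<in> Arr C \<Longrightarrow> Dom C f \<in> Obj C"
  and cod_in_Obj [simp]: "f \<in> Arr C \<Longrightarrow> Cod C f \<in> Obj C"
  and id_in_Arr [simp]: "x \<in> Obj C \<Longrightarrow> Id C x \<in> Arr C"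
  and dom_id [simp]: "x \<in> Obj C \<Longrightarrow> Dom C (Id C x) = x"
  and cod_id [simp]: "x \<in> Obj C \<Longrightarrow> Cod C (Id C x) = x"
  and comp_in_Arr [simp]: "f \<in> Arr C \<Longrightarrow> g \<in> Arr C \<Longrightarrow> Cod C f = Dom C g \<Longrightarrow> g \<cdot> f \<in> Arr C"
  and dom_comp [simp]: "f \<in> Arr C \<Longrightarrow> g \<in> Arr C \<Longrightarrow> Cod C f = Dom C g \<Longrightarrow> Dom C (g \<cdot> f) = Dom C f"
  and cod_comp [simp]: "f \<in> Arr C \<Longrightarrow> g \<in> Arr C \<Longrightarrow> Cod C f = Dom C g \<Longrightarrow> Cod C (g \<cdot> f) = Cod C g"
  and comp_id_left [simp]: "f \<in> Arr C \<Longrightarrow> Cod C f = y \<Longrightarrow> Id C y \<cdot> f = f"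
  and comp_id_right [simp]: "f \<in> Arr C \<Longrightarrow> Dom C f = x \<Longrightarrow> f \<cdot> Id C x = f"
  using is_category unfolding is_category_def hom_def by auto

lemma comp_assoc [simp]:
  "f \<in> Arr C \<Longrightarrow> g \<in> Arr C \<Longrightarrow> h \<in> Arr C \<Longrightarrow> Cod C f = Dom C g \<Longrightarrow> Cod C g = Dom C h \<Longrightarrow>
    (h \<cdot> g) \<cdot> f = h \<cdot> (g \<cdot> f)"
  using is_category unfolding is_category_def by metis

text \<open>The simp set normalises composites to the right, where a commuting square f p = g q
  no longer matches; this lemma applies it under a precomposition.\<close>

lemma comp_eq_precomp:
  assumes "f \<cdot> p = g \<cdot> q" "f \<in> Arr C" "p \<in> Arr C" "g \<in> Arr C" "q \<in> Arr C" "u \<in> Arr C"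
    "Cod C p = Dom C f" "Cod C q = Dom C g" "Dom C p = Dom C q" "Cod C u = Dom C p"
  shows "f \<cdot> (p \<cdot> u) = g \<cdot> (q \<cdot> u)"
proof -
  have "f \<cdot> (p \<cdot> u) = (f \<cdot> p) \<cdot> u" using assms(2-) by simp
  also have "\<dots> = (g \<cdot> q) \<cdot> u" by (simp only: assms(1))
  also have "\<dots> = g \<cdot> (q \<cdot> u)" using assms(2-) by simp
  finally show ?thesis .
qed

lemma pullbackD:
  assumes "is_pullback C f g p q"
  shows "f \<in> Arr C" "g \<in> Arr C" "p \<in> Arr C" "q \<in> Arr C" "Cod C f = Cod C g"
    "Dom C q = Dom C p" "Cod C p = Dom C f" "Cod C q = Dom C g" "f \<cdot> p = g \<cdot> q"
  using assms unfolding is_pullback_def hom_def by auto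

lemma pullback_factor:
  assumes "is_pullback C f g p q" "a \<in> Arr C" "b \<in> Arr C" "Dom C a = Dom C b"
    "Cod C a = Dom C f" "Cod C b = Dom C g" "f \<cdot> a = g \<cdot> b"
  obtains u where "u \<in> Arr C" "Dom C u = Dom C a" "Cod C u = Dom C p" "p \<cdot> u = a" "q \<cdot> u = b"
  using assms unfolding is_pullback_def hom_def by blast

lemma pullback_universal:
  assumes "is_pullback C f g p q" "a \<in> Arr C" "b \<in> Arr C" "Dom C a = Dom C b"
    "Cod C a = Dom C f" "Cod C b = Dom C g" "f \<cdot> a = g \<cdot> b"
  shows "\<exists>!u. u \<in> hom C (Dom C a) (Dom C p) \<and> p \<cdot> u = a \<and> q \<cdot> u = b"
  using assms unfolding is_pullback_def by blast

lemma pullback_arrow_eq: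
  assumes pb: "is_pullback C f g p q" and "u \<in> Arr C" "v \<in> Arr C" "Dom C u = Dom C v"
    "Cod C u = Dom C p" "Cod C v = Dom C p" "p \<cdot> u = p \<cdot> v" "q \<cdot> u = q \<cdot> v"
  shows "u = v"
proof -
  note P = pullbackD[OF pb]
  have "f \<cdot> (p \<cdot> u) = g \<cdot> (q \<cdot> u)"
    using P assms(2,5) by (intro comp_eq_precomp) auto
  then have "\<exists>!w. w \<in> hom C (Dom C (p \<cdot> u)) (Dom C p) \<and> p \<cdot> w = p \<cdot> u \<and> q \<cdot> w = q \<cdot> u"
    using P assms(2,5) by (intro pullback_universal[OF pb]) simp_all
  then show ?thesis
    using P assms unfolding hom_def by auto
qed

lemma pullbackI:
  assumes "f \<in> Arr C" "g \<in> Arr C" "p \<in> Arr C" "q \<in> Arr C" "Cod C f = Cod C g"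
    "Dom C q = Dom C p" "Cod C p = Dom C f" "Cod C q = Dom C g" "f \<cdot> p = g \<cdot> q"
    and factor: "\<And>a b. a \<in> Arr C \<Longrightarrow> b \<in> Arr C \<Longrightarrow> Dom C a = Dom C b \<Longrightarrow>
      Cod C a = Dom C f \<Longrightarrow> Cod C b = Dom C g \<Longrightarrow> f \<cdot> a = g \<cdot> b \<Longrightarrow>
      \<exists>u. u \<in> Arr C \<and> Dom C u = Dom C a \<and> Cod C u = Dom C p \<and> p \<cdot> u = a \<and> q \<cdot> u = b"
    and jointly_mono: "\<And>u v. u \<in> Arr C \<Longrightarrow> v \<in> Arr C \<Longrightarrow> Dom C u = Dom C v \<Longrightarrow>
      Cod C u = Dom C p \<Longrightarrow> Cod C v = Dom C p \<Longrightarrow> p \<cdot> u = p \<cdot> v \<Longrightarrow> q \<cdot> u = q \<cdot> v \<Longrightarrow> u = v"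
  shows "is_pullback C f g p q"
  unfolding is_pullback_def
proof (intro conjI ballI impI)
  fix a b assume "a \<in> Arr C" "b \<in> Arr C" "Dom C a = Dom C b" "Cod C a = Dom C f"
    "Cod C b = Dom C g" "f \<cdot> a = g \<cdot> b"
  with factor obtain u where "u \<in> Arr C" "Dom C u = Dom C a" "Cod C u = Dom C p" "p \<cdot> u = a" "q \<cdot> u = b"
    by blast
  then show "\<exists>!u. u \<in> hom C (Dom C a) (Dom C p) \<and> p \<cdot> u = a \<and> q \<cdot> u = b"
    using jointly_mono unfolding hom_def by (intro ex1I[of _ u]) auto
qed (use assms in \<open>auto simp: hom_def\<close>)

lemma productD:
  assumes "is_product C x y P p1 p2"
  shows "p1 \<in> Arr C" "Dom C p1 = P" "Cod C p1 = x" "p2 \<in> Arr C" "Dom C p2 = P" "Cod C p2 = y"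
  using assms unfolding is_product_def hom_def by auto

lemma product_factor:
  assumes "is_product C x y P p1 p2" "a \<in> Arr C" "b \<in> Arr C" "Dom C a = Dom C b"
    "Cod C a = x" "Cod C b = y"
  obtains u where "u \<in> Arr C" "Dom C u = Dom C a" "Cod C u = P" "p1 \<cdot> u = a" "p2 \<cdot> u = b"
  using assms unfolding is_product_def hom_def by blast

lemma product_universal:
  assumes "is_product C x y P p1 p2" "a \<in> Arr C" "b \<in> Arr C" "Dom C a = Dom C b"
    "Cod C a = x" "Cod C b = y"
  shows "\<exists>!u. u \<in> hom C (Dom C a) P \<and> p1 \<cdot> u = a \<and> p2 \<cdot> u = b"
  using assms unfolding is_product_def by blast

lemma product_arrow_eq:
  assumes pr: "is_product C x y P p1 p2" and "u \<in> Arr C" "v \<in> Arr C" "Dom C u = Dom C v"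
    "Cod C u = P" "Cod C v = P" "p1 \<cdot> u = p1 \<cdot> v" "p2 \<cdot> u = p2 \<cdot> v"
  shows "u = v"
proof -
  note P = productD[OF pr]
  have "\<exists>!w. w \<in> hom C (Dom C (p1 \<cdot> u)) P \<and> p1 \<cdot> w = p1 \<cdot> u \<and> p2 \<cdot> w = p2 \<cdot> u"
    using P assms(2,5) by (intro product_universal[OF pr]) simp_all
  then show ?thesis
    using P assms unfolding hom_def by auto
qed

lemma regular_epi_in_Arr: "regular_epi C e \<Longrightarrow> e \<in> Arr C"
  unfolding regular_epi_def is_coequalizer_def by blast

lemma coequalizerD:
  assumes "is_coequalizer C a b e"
  shows "a \<in> Arr C" "b \<in> Arr C" "e \<in> Arr C" "Dom C a = Dom C b" "Cod C a = Cod C b"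
    "Dom C e = Cod C a" "e \<cdot> a = e \<cdot> b"
  using assms unfolding is_coequalizer_def by auto

lemma coequalizer_factor:
  assumes "is_coequalizer C a b e" "h \<in> Arr C" "Dom C h = Cod C a" "h \<cdot> a = h \<cdot> b"
  obtains w where "w \<in> Arr C" "Dom C w = Cod C e" "Cod C w = Cod C h" "w \<cdot> e = h"
  using assms unfolding is_coequalizer_def hom_def by blast

lemma regular_epi_cancel:
  assumes "regular_epi C e" "w1 \<in> Arr C" "w2 \<in> Arr C" "Dom C w1 = Cod C e"
    "Dom C w2 = Cod C e" "Cod C w1 = Cod C w2" "w1 \<cdot> e = w2 \<cdot> e"
  shows "w1 = w2"
proof -
  from assms(1) obtain a b where co: "is_coequalizer C a b e"
    unfolding regular_epi_def by blast
  note K = coequalizerD[OF co]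
  have "(w1 \<cdot> e) \<cdot> a = (w1 \<cdot> e) \<cdot> b"
    using K assms by simp
  moreover have "w1 \<cdot> e \<in> Arr C" "Dom C (w1 \<cdot> e) = Cod C a"
    using K assms by simp_all
  ultimately have "\<exists>!u. u \<in> hom C (Cod C e) (Cod C (w1 \<cdot> e)) \<and> u \<cdot> e = w1 \<cdot> e"
    using co unfolding is_coequalizer_def by blast
  then show ?thesis
    using K assms unfolding hom_def by auto
qed

lemma pullback_id:
  assumes g: "g \<in> Arr C"
  shows "is_pullback C (Id C (Cod C g)) g g (Id C (Dom C g))"
proof (rule pullbackI)
  fix a b assume "a \<in> Arr C" "b \<in> Arr C" "Dom C a = Dom C b" "Cod C a = Dom C (Id C (Cod C g))"
    "Cod C b = Dom C g" "Id C (Cod C g) \<cdot> a = g \<cdot> b"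
  then show "\<exists>u. u \<in> Arr C \<and> Dom C u = Dom C a \<and> Cod C u = Dom C g \<and> g \<cdot> u = a \<and> Id C (Dom C g) \<cdot> u = b"
    using g by (intro exI[of _ b]) auto
qed (use g in auto)

lemma mono_pullback:
  assumes m: "mono C m" and pb: "is_pullback C m g g' m'"
  shows "mono C m'"
  unfolding mono_def
proof (intro conjI ballI impI)
  note P = pullbackD[OF pb]
  fix a b assume ab: "a \<in> Arr C" "b \<in> Arr C" "Dom C a = Dom C b" "Cod C a = Dom C m'"
    "Cod C b = Dom C m'" "m' \<cdot> a = m' \<cdot> b"
  have "m \<cdot> (g' \<cdot> x) = g \<cdot> (m' \<cdot> x)" if "x \<in> Arr C" "Cod C x = Dom C m'" for x
    by (rule comp_eq_precomp[OF P(9)]) (use P that in auto)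
  then have "m \<cdot> (g' \<cdot> a) = m \<cdot> (g' \<cdot> b)"
    using ab by simp
  then have "g' \<cdot> a = g' \<cdot> b"
    using m P ab unfolding mono_def by simp
  then show "a = b"
    using pullback_arrow_eq[OF pb] P ab by simp
qed (use pullbackD[OF pb] in simp)

definition iso :: "'a \<Rightarrow> bool" where
  "iso u \<longleftrightarrow> u \<in> Arr C \<and> (\<exists>v. v \<in> Arr C \<and> Dom C v = Cod C u \<and> Cod C v = Dom C u \<and>
     v \<cdot> u = Id C (Dom C u) \<and> u \<cdot> v = Id C (Cod C u))"

lemma pullback_unique_up_to_iso:
  assumes pb: "is_pullback C f g p q" and pb0: "is_pullback C f g p0 q0"
  obtains u where "iso u" "Dom C u = Dom C p" "Cod C u = Dom C p0" "q0 \<cdot> u = q"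
proof -
  note P = pullbackD[OF pb] and P0 = pullbackD[OF pb0]
  obtain u where u: "u \<in> Arr C" "Dom C u = Dom C p" "Cod C u = Dom C p0" "p0 \<cdot> u = p" "q0 \<cdot> u = q"
    using pullback_factor[OF pb0, of p q] P by auto
  obtain v where v: "v \<in> Arr C" "Dom C v = Dom C p0" "Cod C v = Dom C p" "p \<cdot> v = p0" "q \<cdot> v = q0"
    using pullback_factor[OF pb, of p0 q0] P0 by auto
  have "p \<cdot> (v \<cdot> u) = p \<cdot> Id C (Dom C p)" "q \<cdot> (v \<cdot> u) = q \<cdot> Id C (Dom C p)"
    using u v P by (simp_all flip: comp_assoc)
  then have vu: "v \<cdot> u = Id C (Dom C p)"
    using pullback_arrow_eq[OF pb] u v P by simp
  have "p0 \<cdot> (u \<cdot> v) = p0 \<cdot> Id C (Dom C p0)" "q0 \<cdot> (u \<cdot> v) = q0 \<cdot> Id C (Dom C p0)"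
    using u v P0 by (simp_all flip: comp_assoc)
  then have uv: "u \<cdot> v = Id C (Dom C p0)"
    using pullback_arrow_eq[OF pb0] u v P0 by simp
  have "iso u"
    unfolding iso_def using u v vu uv by auto
  with u that show ?thesis by blast
qed

lemma regular_epi_comp_iso:
  assumes e: "regular_epi C e" and u: "iso u" "Cod C u = Dom C e"
  shows "regular_epi C (e \<cdot> u)"
proof -
  from e obtain a b where co: "is_coequalizer C a b e"
    unfolding regular_epi_def by blast
  note K = coequalizerD[OF co]
  obtain v where v: "v \<in> Arr C" "Dom C v = Cod C u" "Cod C v = Dom C u"
    "v \<cdot> u = Id C (Dom C u)" "u \<cdot> v = Id C (Cod C u)" and u_arr: "u \<in> Arr C"
    using u unfolding iso_def by blast
  have "is_coequalizer C (v \<cdot> a) (v \<cdot> b) (e \<cdot> u)"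
    unfolding is_coequalizer_def
  proof (intro conjI ballI impI)
    have "(e \<cdot> u) \<cdot> (v \<cdot> x) = e \<cdot> x" if "x \<in> Arr C" "Cod C x = Cod C a" for x
    proof -
      have "(e \<cdot> u) \<cdot> (v \<cdot> x) = e \<cdot> ((u \<cdot> v) \<cdot> x)"
        using that K u(2) v(1-3) u_arr by simp
      also have "\<dots> = e \<cdot> x"
        using that K u by (subst v(5)) simp
      finally show ?thesis .
    qed
    then show "(e \<cdot> u) \<cdot> (v \<cdot> a) = (e \<cdot> u) \<cdot> (v \<cdot> b)"
      using K by simp
  next
    fix h assume h: "h \<in> Arr C" "Dom C h = Cod C (v \<cdot> a)" "h \<cdot> (v \<cdot> a) = h \<cdot> (v \<cdot> b)"
    then obtain w where w: "w \<in> Arr C" "Dom C w = Cod C e" "Cod C w = Cod C h" "w \<cdot> e = h \<cdot> v"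
      using coequalizer_factor[OF co, of "h \<cdot> v"] K u v by auto
    have "w \<cdot> (e \<cdot> u) = (w \<cdot> e) \<cdot> u"
      using w(1-3) K u(2) u_arr by simp
    also have "\<dots> = (h \<cdot> v) \<cdot> u"
      by (simp only: w(4))
    also have "\<dots> = h \<cdot> (v \<cdot> u)"
      using h K u(2) v(1-3) u_arr by simp
    also have "\<dots> = h"
      using h K u(2) u_arr v(1-3) by (subst v(4)) simp
    finally have wh: "w \<cdot> (e \<cdot> u) = h" .
    have eu_v: "(e \<cdot> u) \<cdot> v = e"
      using K u(2) v(1-3) u_arr by (simp add: v(5))
    show "\<exists>!w. w \<in> hom C (Cod C (e \<cdot> u)) (Cod C h) \<and> w \<cdot> (e \<cdot> u) = h"
    proof (rule ex1I[of _ w])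
      show "w \<in> hom C (Cod C (e \<cdot> u)) (Cod C h) \<and> w \<cdot> (e \<cdot> u) = h"
        using w wh K u(2) u_arr unfolding hom_def by simp
    next
      fix w' assume w': "w' \<in> hom C (Cod C (e \<cdot> u)) (Cod C h) \<and> w' \<cdot> (e \<cdot> u) = h"
      then have w'_arr: "w' \<in> Arr C" "Dom C w' = Cod C e" "Cod C w' = Cod C h"
        using K u(2) u_arr unfolding hom_def by auto
      have "w' \<cdot> e = (w' \<cdot> (e \<cdot> u)) \<cdot> v"
        using w'_arr K u(2) v(1-3) u_arr by (subst eu_v[symmetric]) simp
      then have "w' \<cdot> e = w \<cdot> e"
        using w' w(4) by simp
      then show "w' = w"
        using regular_epi_cancel[OF e] w w'_arr by simp
    qed
  qed (use K u v u_arr in auto)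
  then show ?thesis
    unfolding regular_epi_def by blast
qed

lemma regular_epi_pullback_transfer:
  assumes "is_pullback C f g p q" "is_pullback C f g p0 q0" "regular_epi C q0"
  shows "regular_epi C q"
proof -
  obtain u where "iso u" "Dom C u = Dom C p" "Cod C u = Dom C p0" "q0 \<cdot> u = q"
    using pullback_unique_up_to_iso[OF assms(1,2)] .
  then show ?thesis
    using regular_epi_comp_iso[OF assms(3), of u] pullbackD[OF assms(2)] by simp
qed

lemma pullback_paste:
  assumes right: "is_pullback C f k p h" and left: "is_pullback C h s p' q'"
  shows "is_pullback C f (k \<cdot> s) (p \<cdot> p') q'"
proof -
  note R = pullbackD[OF right] and L = pullbackD[OF left]
  show ?thesis
  proof (rule pullbackI)
    have "f \<cdot> (p \<cdot> p') = k \<cdot> (h \<cdot> p')"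
      by (rule comp_eq_precomp[OF R(9)]) (use R L in auto)
    also have "\<dots> = k \<cdot> (s \<cdot> q')"
      using L(9) by simp
    finally show "f \<cdot> (p \<cdot> p') = (k \<cdot> s) \<cdot> q'"
      using R L by simp
  next
    fix a b assume ab: "a \<in> Arr C" "b \<in> Arr C" "Dom C a = Dom C b" "Cod C a = Dom C f"
      "Cod C b = Dom C (k \<cdot> s)" "f \<cdot> a = (k \<cdot> s) \<cdot> b"
    obtain u where u: "u \<in> Arr C" "Dom C u = Dom C a" "Cod C u = Dom C p" "p \<cdot> u = a" "h \<cdot> u = s \<cdot> b"
      using pullback_factor[OF right, of a "s \<cdot> b"] R L ab by auto
    obtain v where "v \<in> Arr C" "Dom C v = Dom C u" "Cod C v = Dom C p'" "p' \<cdot> v = u" "q' \<cdot> v = b"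
      using pullback_factor[OF left, of u b] R L ab u by auto
    then show "\<exists>v. v \<in> Arr C \<and> Dom C v = Dom C a \<and> Cod C v = Dom C (p \<cdot> p') \<and>
        (p \<cdot> p') \<cdot> v = a \<and> q' \<cdot> v = b"
      using R L u by (intro exI[of _ v]) auto
  next
    fix u v assume uv: "u \<in> Arr C" "v \<in> Arr C" "Dom C u = Dom C v" "Cod C u = Dom C (p \<cdot> p')"
      "Cod C v = Dom C (p \<cdot> p')" "(p \<cdot> p') \<cdot> u = (p \<cdot> p') \<cdot> v" "q' \<cdot> u = q' \<cdot> v"
    have "h \<cdot> (p' \<cdot> x) = s \<cdot> (q' \<cdot> x)" if "x \<in> Arr C" "Cod C x = Dom C p'" for x
      by (rule comp_eq_precomp[OF L(9)]) (use L that in auto)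
    then have "p' \<cdot> u = p' \<cdot> v"
      using pullback_arrow_eq[OF right, of "p' \<cdot> u" "p' \<cdot> v"] R L uv by simp
    then show "u = v"
      using pullback_arrow_eq[OF left] R L uv by simp
  qed (use R L in auto)
qed

lemma product_map_pullback:
  assumes pa: "is_product C E A P p1 p2" and qb: "is_product C E B Q q1 q2"
    and f: "f \<in> Arr C" "Dom C f = A" "Cod C f = B"
    and h: "h \<in> hom C P Q" "q1 \<cdot> h = p1" "q2 \<cdot> h = f \<cdot> p2"
  shows "is_pullback C f q2 p2 h"
proof -
  note PA = productD[OF pa] and QB = productD[OF qb]
  have H: "h \<in> Arr C" "Dom C h = P" "Cod C h = Q"
    using h unfolding hom_def by auto
  have h_comp: "q1 \<cdot> (h \<cdot> x) = p1 \<cdot> x" "q2 \<cdot> (h \<cdot> x) = f \<cdot> (p2 \<cdot> x)"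
    if "x \<in> Arr C" "Cod C x = P" for x
    using that H PA QB f by (simp_all add: h(2,3) flip: comp_assoc)
  show ?thesis
  proof (rule pullbackI)
    fix a b assume ab: "a \<in> Arr C" "b \<in> Arr C" "Dom C a = Dom C b" "Cod C a = Dom C f"
      "Cod C b = Dom C q2" "f \<cdot> a = q2 \<cdot> b"
    obtain u where u: "u \<in> Arr C" "Dom C u = Dom C a" "Cod C u = P" "p1 \<cdot> u = q1 \<cdot> b" "p2 \<cdot> u = a"
      using product_factor[OF pa, of "q1 \<cdot> b" a] ab QB f by auto
    have "h \<cdot> u = b"
      using product_arrow_eq[OF qb, of "h \<cdot> u" b] h_comp u H ab QB by simp
    then show "\<exists>u. u \<in> Arr C \<and> Dom C u = Dom C a \<and> Cod C u = Dom C p2 \<and> p2 \<cdot> u = a \<and> h \<cdot> u = b"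
      using u PA by auto
  next
    fix u v assume "u \<in> Arr C" "v \<in> Arr C" "Dom C u = Dom C v" "Cod C u = Dom C p2"
      "Cod C v = Dom C p2" "p2 \<cdot> u = p2 \<cdot> v" "h \<cdot> u = h \<cdot> v"
    moreover have "p1 \<cdot> u = p1 \<cdot> v"
      using h_comp(1)[of u] h_comp(1)[of v] calculation PA by simp
    ultimately show "u = v"
      using product_arrow_eq[OF pa] PA by simp
  qed (use PA QB H f h in auto)
qed

lemma regular_epi_pullback_if_factorizations_pullback_stable:
  assumes "factorizations_pullback_stable C" "regular_epi C f" "is_pullback C f g p q"
  shows "regular_epi C q"
proof -
  note P = pullbackD[OF assms(3)]
  have "mono C (Id C (Cod C g))"
    using P unfolding mono_def by simp
  then have "regular_epi C q \<and> mono C (Id C (Dom C g))"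
    using assms(1) pullback_id[OF P(2)] assms(2,3) P
    unfolding factorizations_pullback_stable_def by (elim allE impE) auto
  then show ?thesis ..
qed

end

locale finitely_complete_category = category +
  assumes finitely_complete: "finitely_complete C"
begin

lemma pullback_exists:
  assumes "f \<in> Arr C" "g \<in> Arr C" "Cod C f = Cod C g"
  obtains p q where "is_pullback C f g p q"
  using assms finitely_complete unfolding finitely_complete_def by blast

lemma product_exists:
  assumes x: "x \<in> Obj C" and y: "y \<in> Obj C"
  obtains P p1 p2 where "is_product C x y P p1 p2"
proof -
  obtain t where t: "is_terminal C t"
    using finitely_complete unfolding finitely_complete_def by blast
  obtain ux uy where U: "ux \<in> hom C x t" "uy \<in> hom C y t"
    using t x y unfolding is_terminal_def by blast
  then obtain p q where pb: "is_pullback C ux uy p q"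
    using pullback_exists[of ux uy] unfolding hom_def by auto
  note P = pullbackD[OF pb]
  have "is_product C x y (Dom C p) p q"
    unfolding is_product_def
  proof (intro conjI ballI impI)
    fix a b assume ab: "a \<in> Arr C" "b \<in> Arr C" "Dom C a = Dom C b" "Cod C a = x" "Cod C b = y"
    have "ux \<cdot> a \<in> hom C (Dom C a) t" "uy \<cdot> b \<in> hom C (Dom C a) t"
      using ab U unfolding hom_def by auto
    moreover have "Dom C a \<in> Obj C"
      using ab by simp
    ultimately have "ux \<cdot> a = uy \<cdot> b"
      using t unfolding is_terminal_def by blast
    then show "\<exists>!u. u \<in> hom C (Dom C a) (Dom C p) \<and> p \<cdot> u = a \<and> q \<cdot> u = b"
      using pullback_universal[OF pb, of a b] ab U unfolding hom_def by simp
  qed (use P U in \<open>auto simp: hom_def\<close>)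
  then show ?thesis ..
qed

lemma regular_epi_pullback_stable:
  assumes product_map:
      "\<And>f E P p1 p2 Q q1 q2 h. regular_epi C f \<Longrightarrow> E \<in> Obj C \<Longrightarrow>
        is_product C E (Dom C f) P p1 p2 \<Longrightarrow> is_product C E (Cod C f) Q q1 q2 \<Longrightarrow>
        h \<in> hom C P Q \<Longrightarrow> q1 \<cdot> h = p1 \<Longrightarrow> q2 \<cdot> h = f \<cdot> p2 \<Longrightarrow> regular_epi C h"
    and split_mono_pullback:
      "\<And>e s p q. regular_epi C e \<Longrightarrow> split_mono C s \<Longrightarrow> Cod C s = Cod C e \<Longrightarrow>
        is_pullback C e s p q \<Longrightarrow> regular_epi C q"
    and f: "regular_epi C f" and pb: "is_pullback C f g p q"
  shows "regular_epi C q"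
proof -
  note P = pullbackD[OF pb]
  obtain PA p1 p2 where pa: "is_product C (Dom C g) (Dom C f) PA p1 p2"
    using product_exists[of "Dom C g" "Dom C f"] P by auto
  obtain PB q1 q2 where qb: "is_product C (Dom C g) (Cod C f) PB q1 q2"
    using product_exists[of "Dom C g" "Cod C f"] P by auto
  note PA = productD[OF pa] and QB = productD[OF qb]
  obtain h where h: "h \<in> Arr C" "Dom C h = PA" "Cod C h = PB" "q1 \<cdot> h = p1" "q2 \<cdot> h = f \<cdot> p2"
    using product_factor[OF qb, of p1 "f \<cdot> p2"] PA P by auto
  have h_hom: "h \<in> hom C PA PB"
    using h unfolding hom_def by simp
  have h_regular: "regular_epi C h"
    using product_map[OF f _ pa qb h_hom h(4,5)] P by simp
  obtain s where s: "s \<in> Arr C" "Dom C s = Dom C g" "Cod C s = PB" "q1 \<cdot> s = Id C (Dom C g)" "q2 \<cdot> s = g"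
    using product_factor[OF qb, of "Id C (Dom C g)" g] P by auto
  have "split_mono C s"
    unfolding split_mono_def hom_def using s QB by auto
  moreover obtain p' q' where pb': "is_pullback C h s p' q'"
    using pullback_exists[of h s] h s by auto
  ultimately have "regular_epi C q'"
    using split_mono_pullback h_regular h s by simp
  moreover have "is_pullback C f g (p2 \<cdot> p') q'"
    using pullback_paste[OF product_map_pullback[OF pa qb _ _ _ h_hom h(4,5)] pb'] P s by simp
  ultimately show ?thesis
    using regular_epi_pullback_transfer[OF pb] by blast
qed

end

theorem lemma2p1:
  fixes C :: "('o, 'a) category"
  assumes "is_category C" and "finitely_complete C"
  shows "regular_category C \<longleftrightarrow>
    (regepi_mono_factorizations C \<and>
     (\<forall>f E P p1 p2 Q q1 q2 h.
        regular_epi C f \<longrightarrow> E \<in> Obj C \<longrightarrow>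
        is_product C E (Dom C f) P p1 p2 \<longrightarrow> is_product C E (Cod C f) Q q1 q2 \<longrightarrow>
        h \<in> hom C P Q \<longrightarrow> Comp C q1 h = p1 \<longrightarrow> Comp C q2 h = Comp C f p2 \<longrightarrow>
        regular_epi C h) \<and>
     (\<forall>e s p q.
        regular_epi C e \<longrightarrow> split_mono C s \<longrightarrow> Cod C s = Cod C e \<longrightarrow>
        is_pullback C e s p q \<longrightarrow> regular_epi C q))"
  (is "_ \<longleftrightarrow> (_ \<and> ?product_maps \<and> ?split_mono_pullbacks)")
proof -
  interpret finitely_complete_category C
    using assms by unfold_locales
  show ?thesis
  proof
    assume "regular_category C"
    then have factor: "regepi_mono_factorizations C" and stable: "factorizations_pullback_stable C"
      unfolding regular_category_def by auto
    note pullback_regular = regular_epi_pullback_if_factorizations_pullback_stable[OF stable]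
    have ?product_maps
      using pullback_regular product_map_pullback regular_epi_in_Arr by blast
    moreover have ?split_mono_pullbacks
      using pullback_regular by blast
    ultimately show "regepi_mono_factorizations C \<and> ?product_maps \<and> ?split_mono_pullbacks"
      using factor by blast
  next
    assume "regepi_mono_factorizations C \<and> ?product_maps \<and> ?split_mono_pullbacks"
    then have factor: "regepi_mono_factorizations C"
      and product_maps: ?product_maps and split_mono_pullbacks: ?split_mono_pullbacks
      by blast+
    have "regular_epi C q" if "regular_epi C f" "is_pullback C f g p q" for f g p q
      by (rule regular_epi_pullback_stable[OF _ _ that])
        (use product_maps split_mono_pullbacks in blast)+
    then have "factorizations_pullback_stable C"
      unfolding factorizations_pullback_stable_def using mono_pullback by blast
    then show "regular_category C"
      unfolding regular_category_def using assms factor by blast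
  qed
qed

end
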